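(* Let $X$ be a graph (multiple edges and loops allowed) which is connected, has countable vertex set, has bounded degree, and has no vertex of degree one. Fix $x_0\in VX$. For $x\in VX$ and $k\ge 0$ let $c_k(x)$ be the number of geodesic loops of length $k$ starting at $x$, let $(\Delta_X c_k)(x)=\deg(x)c_k(x)-\sum_{e\in E_x}c_k(t(e))$, and let $N_m(x_0)$ be the number of closed geodesic paths of length $m$ starting at $x_0$. Then for every integer $m>2$, $$N_m(x_0)=c_m(x_0)-(\deg(x_0)-2)\sum_{i=1}^{\lceil m/2\rceil-1}c_{m-2i}(x_0)+\sum_{i=1}^{\lceil m/2\rceil-1}i\,(\Delta_X c_{m-2i})(x_0),$$ where $\lceil\cdot\rceil$ is the ceiling function.
   Context: A graph $X=(VX,EX)$ consists of disjoint sets $VX$, $EX$ with maps $e\mapsto (o(e),t(e))\in VX\times VX$ and $e\mapsto\bar e$ such that $\bar e\ne e$, $\bar{\bar e}=e$, $o(e)=t(\bar e)$. For $x\in VX$, $E_x=\{e\in EX: o(e)=x\}$ and $\deg(x)=|E_x|$; bounded degree means $\sup_x\deg(x)<\infty$. A path of length $n$ is a sequence of edges $c=(e_1,\dots,e_n)$ with $t(e_i)=o(e_{i+1})$; $o(c)=o(e_1)$, $t(c)=t(e_n)$; it is closed if $o(c)=t(c)$; a vertex is regarded as a path of length $0$. It has a back-tracking if $e_{i+1}=\bar e_i$ for some $i$, and has a tail if $e_n=\bar e_1$. A geodesic loop is a closed path without back-tracking; a closed geodesic path is a geodesic loop without tail. "Starting at $x$" means $o(c)=x$. *)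

theory Defs
  imports Complex_Main "HOL-Library.Countable_Set"
begin

text \<open>A graph in the sense of Serre: vertex set V, edge set E (of a separate type, so
  disjointness is automatic), origin map org, terminus map ter, reversal bar.\<close>

definition is_graph :: "'v set \<Rightarrow> 'e set \<Rightarrow> ('e \<Rightarrow> 'v) \<Rightarrow> ('e \<Rightarrow> 'v) \<Rightarrow> ('e \<Rightarrow> 'e) \<Rightarrow> bool" where
  "is_graph V E org ter bar \<longleftrightarrow>
     (\<forall>e\<in>E. org e \<in> V \<and> ter e \<in> V \<and> bar e \<in> E \<and> bar e \<noteq> e \<and> bar (bar e) = e
              \<and> org e = ter (bar e))"

definition out_edges :: "'e set \<Rightarrow> ('e \<Rightarrow> 'v) \<Rightarrow> 'v \<Rightarrow> 'e set" where
  "out_edges E org x = {e \<in> E. org e = x}"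

definition gdeg :: "'e set \<Rightarrow> ('e \<Rightarrow> 'v) \<Rightarrow> 'v \<Rightarrow> nat" where
  "gdeg E org x = card (out_edges E org x)"

definition bounded_degree :: "'v set \<Rightarrow> 'e set \<Rightarrow> ('e \<Rightarrow> 'v) \<Rightarrow> bool" where
  "bounded_degree V E org \<longleftrightarrow>
     (\<exists>B::nat. \<forall>x\<in>V. finite (out_edges E org x) \<and> card (out_edges E org x) \<le> B)"

definition is_path :: "'e set \<Rightarrow> ('e \<Rightarrow> 'v) \<Rightarrow> ('e \<Rightarrow> 'v) \<Rightarrow> 'e list \<Rightarrow> bool" where
  "is_path E org ter c \<longleftrightarrow>
     set c \<subseteq> E \<and> (\<forall>i. Suc i < length c \<longrightarrow> ter (c ! i) = org (c ! Suc i))"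

definition no_backtracking :: "('e \<Rightarrow> 'e) \<Rightarrow> 'e list \<Rightarrow> bool" where
  "no_backtracking bar c \<longleftrightarrow> (\<forall>i. Suc i < length c \<longrightarrow> c ! Suc i \<noteq> bar (c ! i))"

definition has_tail :: "('e \<Rightarrow> 'e) \<Rightarrow> 'e list \<Rightarrow> bool" where
  "has_tail bar c \<longleftrightarrow> c \<noteq> [] \<and> last c = bar (hd c)"

definition connected_graph :: "'v set \<Rightarrow> 'e set \<Rightarrow> ('e \<Rightarrow> 'v) \<Rightarrow> ('e \<Rightarrow> 'v) \<Rightarrow> bool" where
  "connected_graph V E org ter \<longleftrightarrow>
     (\<forall>x\<in>V. \<forall>y\<in>V. x = y \<or>
        (\<exists>c. c \<noteq> [] \<and> is_path E org ter c \<and> org (hd c) = x \<and> ter (last c) = y))"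

definition geod_loops :: "'e set \<Rightarrow> ('e \<Rightarrow> 'v) \<Rightarrow> ('e \<Rightarrow> 'v) \<Rightarrow> ('e \<Rightarrow> 'e) \<Rightarrow> nat \<Rightarrow> 'v \<Rightarrow> 'e list set" where
  "geod_loops E org ter bar k x =
     {c. length c = k \<and> c \<noteq> [] \<and> is_path E org ter c \<and> org (hd c) = x \<and> ter (last c) = x
         \<and> no_backtracking bar c}"

text \<open>c_k(x): number of geodesic loops of length k at x; for k = 0 the only one is the
  vertex x itself, regarded as a path of length 0.\<close>
definition ck :: "'e set \<Rightarrow> ('e \<Rightarrow> 'v) \<Rightarrow> ('e \<Rightarrow> 'v) \<Rightarrow> ('e \<Rightarrow> 'e) \<Rightarrow> nat \<Rightarrow> 'v \<Rightarrow> nat" where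
  "ck E org ter bar k x = (if k = 0 then 1 else card (geod_loops E org ter bar k x))"

definition laplace_ck :: "'e set \<Rightarrow> ('e \<Rightarrow> 'v) \<Rightarrow> ('e \<Rightarrow> 'v) \<Rightarrow> ('e \<Rightarrow> 'e) \<Rightarrow> nat \<Rightarrow> 'v \<Rightarrow> int" where
  "laplace_ck E org ter bar k x =
     int (gdeg E org x) * int (ck E org ter bar k x)
     - (\<Sum>e\<in>out_edges E org x. int (ck E org ter bar k (ter e)))"

definition Nm :: "'e set \<Rightarrow> ('e \<Rightarrow> 'v) \<Rightarrow> ('e \<Rightarrow> 'v) \<Rightarrow> ('e \<Rightarrow> 'e) \<Rightarrow> nat \<Rightarrow> 'v \<Rightarrow> nat" where
  "Nm E org ter bar m x = card {c \<in> geod_loops E org ter bar m x. \<not> has_tail bar c}"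

end

theory Submission
  imports Defs
begin

text \<open>Count the pairs (e, c) with e in E_x and c a geodesic loop of length k at t(e); there
  are as many as the sum of c_k(t(e)) over E_x. Sort them by whether e c and c (bar e)
  back-track. If neither does, e c (bar e) is a geodesic loop of length k + 2 at x with tail.
  If only e c does, rotating c gives a closed geodesic path of length k at x; if only
  c (bar e) does, so does e c with its last edge removed. If both do, c = (bar e) c' e with c'
  a geodesic loop of length k - 2 at x and e avoiding the first edge of c' and the reverse of
  its last edge, which leaves deg(x) - 2 choices, or deg(x) - 1 if c' has a tail. So the
  numbers T_k of geodesic loops with tail satisfy a second order recurrence with
  T_1 = T_2 = 0, and N_m = c_m - T_m.\<close>

lemma successively_conj_iff:
  "successively (\<lambda>a b. P a b \<and> Q a b) xs \<longleftrightarrow> successively P xs \<and> successively Q xs"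
  by (induction xs rule: induct_list012) auto

lemma card_filter_split: "finite S \<Longrightarrow> card S = card {p\<in>S. P p} + card {p\<in>S. \<not> P p}"
  by (subst card_Un_disjoint[symmetric]) (auto intro: arg_cong[where f=card])

lemma nat_ceiling_half_minus_one: "nat \<lceil>real m / 2\<rceil> - 1 = (m - 1) div 2" for m :: nat
  by linarith

definition parity_sum :: "(nat \<Rightarrow> int) \<Rightarrow> nat \<Rightarrow> int" where
  "parity_sum a m = (\<Sum>i\<in>{1..(m - 1) div 2}. a (m - 2 * i))"

definition weighted_parity_sum :: "(nat \<Rightarrow> int) \<Rightarrow> nat \<Rightarrow> int" where
  "weighted_parity_sum a m = (\<Sum>i\<in>{1..(m - 1) div 2}. int i * a (m - 2 * i))"

lemma parity_sum_le_2: "m \<le> 2 \<Longrightarrow> parity_sum a m = 0"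
  unfolding parity_sum_def by auto

lemma weighted_parity_sum_le_2: "m \<le> 2 \<Longrightarrow> weighted_parity_sum a m = 0"
  unfolding weighted_parity_sum_def by auto

lemma parity_sum_add_2:
  assumes "m \<ge> 1"
  shows "parity_sum a (m + 2) = a m + parity_sum a m"
proof -
  let ?n = "(m - 1) div 2"
  have "(m + 2 - 1) div 2 = Suc ?n" using assms by auto
  then have "parity_sum a (m + 2) = (\<Sum>i\<in>{1..Suc ?n}. a (m + 2 - 2 * i))"
    unfolding parity_sum_def by simp
  also have "\<dots> = a m + (\<Sum>i\<in>{Suc 1..Suc ?n}. a (m + 2 - 2 * i))"
    by (subst sum.atLeast_Suc_atMost) auto
  also have "(\<Sum>i\<in>{Suc 1..Suc ?n}. a (m + 2 - 2 * i)) = parity_sum a m"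
    unfolding parity_sum_def sum.shift_bounds_cl_Suc_ivl by simp
  finally show ?thesis .
qed

lemma weighted_parity_sum_add_2:
  assumes "m \<ge> 1"
  shows "weighted_parity_sum a (m + 2) = a m + weighted_parity_sum a m + parity_sum a m"
proof -
  let ?n = "(m - 1) div 2"
  have "(m + 2 - 1) div 2 = Suc ?n" using assms by auto
  then have "weighted_parity_sum a (m + 2) = (\<Sum>i\<in>{1..Suc ?n}. int i * a (m + 2 - 2 * i))"
    unfolding weighted_parity_sum_def by simp
  also have "\<dots> = a m + (\<Sum>i\<in>{Suc 1..Suc ?n}. int i * a (m + 2 - 2 * i))"
    by (subst sum.atLeast_Suc_atMost) auto
  also have "(\<Sum>i\<in>{Suc 1..Suc ?n}. int i * a (m + 2 - 2 * i))
      = (\<Sum>i\<in>{1..?n}. int i * a (m - 2 * i) + a (m - 2 * i))"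
    unfolding sum.shift_bounds_cl_Suc_ivl by (simp add: algebra_simps)
  also have "\<dots> = weighted_parity_sum a m + parity_sum a m"
    unfolding weighted_parity_sum_def parity_sum_def by (simp add: sum.distrib)
  finally show ?thesis by simp
qed

lemma recurrence_solution:
  fixes T c s :: "nat \<Rightarrow> int" and d :: int
  assumes T_1: "T 1 = 0" and T_2: "T 2 = 0"
    and recurrence: "\<And>k. k \<ge> 1 \<Longrightarrow> s k = T (k + 2) + 2 * (c k - T k) +
          (if k \<le> 2 then 0 else (d - 2) * c (k - 2) + T (k - 2))"
    and "m \<ge> 1"
  shows "T m = (d - 2) * parity_sum c m - weighted_parity_sum (\<lambda>j. d * c j - s j) m"
  using \<open>m \<ge> 1\<close>
proof (induction m rule: less_induct)
  case (less m)
  let ?D = "\<lambda>j. d * c j - s j"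
  let ?F = "\<lambda>m. (d - 2) * parity_sum c m - weighted_parity_sum ?D m"
  show ?case
  proof (cases "m \<le> 2")
    case True
    then have "m = 1 \<or> m = 2" using less.prems by auto
    then show ?thesis using T_1 T_2 True parity_sum_le_2 weighted_parity_sum_le_2 by auto
  next
    case False
    define k where "k = m - 2"
    have k: "m = k + 2" "k \<ge> 1" using False unfolding k_def by auto
    have IH: "T k = ?F k" using less k by auto
    have T_m: "T m = s k - 2 * (c k - T k) - (if k \<le> 2 then 0 else (d - 2) * c (k - 2) + T (k - 2))"
      using recurrence[OF k(2)] k by simp
    have F_m: "?F m = (d - 2) * (c k + parity_sum c k) - (?D k + weighted_parity_sum ?D k + parity_sum ?D k)"
      using k parity_sum_add_2[OF k(2)] weighted_parity_sum_add_2[OF k(2)] by simp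
    show ?thesis
    proof (cases "k \<le> 2")
      case True
      then show ?thesis
        using T_m F_m IH parity_sum_le_2[OF True] weighted_parity_sum_le_2[OF True]
        by (simp add: algebra_simps)
    next
      case False
      define j where "j = k - 2"
      have j: "k = j + 2" "j \<ge> 1" using False unfolding j_def by auto
      have "T j = ?F j" using less k j by auto
      then show ?thesis
        using T_m F_m IH False j parity_sum_add_2[OF j(2), of c]
          weighted_parity_sum_add_2[OF j(2), of ?D] parity_sum_add_2[OF j(2), of ?D]
        by (simp add: algebra_simps)
    qed
  qed
qed

locale locally_finite_graph =
  fixes V :: "'v set" and E :: "'e set" and org ter :: "'e \<Rightarrow> 'v" and bar :: "'e \<Rightarrow> 'e"
  assumes graph: "is_graph V E org ter bar"
    and finite_out_edges: "\<And>x. x \<in> V \<Longrightarrow> finite (out_edges E org x)"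
begin

abbreviation out :: "'v \<Rightarrow> 'e set" where
  "out x \<equiv> out_edges E org x"

definition geodesic_step :: "'e \<Rightarrow> 'e \<Rightarrow> bool" where
  "geodesic_step a b \<longleftrightarrow> ter a = org b \<and> b \<noteq> bar a"

definition geodesic_loop :: "nat \<Rightarrow> 'v \<Rightarrow> 'e list \<Rightarrow> bool" where
  "geodesic_loop k x c \<longleftrightarrow> length c = k \<and> c \<noteq> [] \<and> set c \<subseteq> E \<and> successively geodesic_step c
     \<and> org (hd c) = x \<and> ter (last c) = x"

definition tailed_loops :: "nat \<Rightarrow> 'v \<Rightarrow> 'e list set" where
  "tailed_loops k x = {c. geodesic_loop k x c \<and> has_tail bar c}"

definition closed_geodesics :: "nat \<Rightarrow> 'v \<Rightarrow> 'e list set" where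
  "closed_geodesics k x = {c. geodesic_loop k x c \<and> \<not> has_tail bar c}"

definition loops_at_neighbours :: "nat \<Rightarrow> 'v \<Rightarrow> ('e \<times> 'e list) set" where
  "loops_at_neighbours k x = (SIGMA e:out x. {c. geodesic_loop k (ter e) c})"

lemma bar_in_E [simp]: "e \<in> E \<Longrightarrow> bar e \<in> E"
  and bar_neq [simp]: "e \<in> E \<Longrightarrow> bar e \<noteq> e"
  and bar_bar [simp]: "e \<in> E \<Longrightarrow> bar (bar e) = e"
  and org_bar [simp]: "e \<in> E \<Longrightarrow> org (bar e) = ter e"
  and ter_bar [simp]: "e \<in> E \<Longrightarrow> ter (bar e) = org e"
  and org_in_V: "e \<in> E \<Longrightarrow> org e \<in> V"
  using graph unfolding is_graph_def by metis+

lemma bar_eq_iff: "a \<in> E \<Longrightarrow> b \<in> E \<Longrightarrow> bar a = bar b \<longleftrightarrow> a = b"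
  by (metis bar_bar)

lemma eq_bar_iff: "a \<in> E \<Longrightarrow> b \<in> E \<Longrightarrow> a = bar b \<longleftrightarrow> b = bar a"
  by (metis bar_bar)

lemma mem_out_iff: "e \<in> out x \<longleftrightarrow> e \<in> E \<and> org e = x"
  unfolding out_edges_def by auto

lemma finite_out: "finite (out x)"
proof (cases "x \<in> V")
  case False
  then have "out x = {}" using org_in_V by (auto simp: mem_out_iff)
  then show ?thesis by simp
qed (rule finite_out_edges)

lemma geod_loops_eq: "geod_loops E org ter bar k x = {c. geodesic_loop k x c}"
  unfolding geod_loops_def geodesic_loop_def is_path_def no_backtracking_def geodesic_step_def
    successively_conj_iff successively_conv_nth by auto

lemma card_geodesic_loops: "k \<ge> 1 \<Longrightarrow> ck E org ter bar k x = card {c. geodesic_loop k x c}"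
  unfolding ck_def geod_loops_eq by simp

definition paths_from :: "nat \<Rightarrow> 'v \<Rightarrow> 'e list set" where
  "paths_from k x = {c. length c = k \<and> set c \<subseteq> E \<and> successively (\<lambda>a b. ter a = org b) c
      \<and> (c \<noteq> [] \<longrightarrow> org (hd c) = x)}"

lemma finite_paths_from: "finite (paths_from k x)"
proof (induction k arbitrary: x)
  case 0
  have "paths_from 0 x \<subseteq> {[]}" unfolding paths_from_def by auto
  then show ?case using finite_subset by blast
next
  case (Suc k)
  have "paths_from (Suc k) x \<subseteq> (\<lambda>(e, c). e # c) ` (SIGMA e:out x. paths_from k (ter e))"
  proof
    fix d assume d: "d \<in> paths_from (Suc k) x"
    then obtain e c where "d = e # c" unfolding paths_from_def by (cases d) auto
    then show "d \<in> (\<lambda>(e, c). e # c) ` (SIGMA e:out x. paths_from k (ter e))"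
      using d unfolding paths_from_def out_edges_def by (force simp: successively_Cons)
  qed
  moreover have "finite (SIGMA e:out x. paths_from k (ter e))"
    using Suc finite_out by blast
  ultimately show ?case using finite_subset by blast
qed

lemma finite_geodesic_loops: "finite {c. geodesic_loop k x c}"
proof (rule finite_subset[OF _ finite_paths_from])
  show "{c. geodesic_loop k x c} \<subseteq> paths_from k x"
    unfolding geodesic_loop_def paths_from_def geodesic_step_def successively_conj_iff by auto
qed

lemma finite_loops_at_neighbours: "finite (loops_at_neighbours k x)"
  unfolding loops_at_neighbours_def using finite_out finite_geodesic_loops by blast

lemma tailed_loops_le_2:
  assumes "k \<le> 2"
  shows "tailed_loops k x = {}"
proof -
  have False if c: "geodesic_loop k x c" "has_tail bar c" for c
  proof (cases c)
    case Nil
    then show ?thesis using c by (auto simp: geodesic_loop_def)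
  next
    case (Cons h r)
    have "h \<in> E" using c Cons by (auto simp: geodesic_loop_def)
    show ?thesis
    proof (cases r)
      case Nil
      then show ?thesis using c Cons bar_neq[OF \<open>h \<in> E\<close>] by (auto simp: has_tail_def)
    next
      case (Cons h' r')
      then have "r' = []" using c \<open>c = h # r\<close> assms by (auto simp: geodesic_loop_def)
      then show ?thesis
        using c Cons \<open>c = h # r\<close> by (auto simp: geodesic_loop_def geodesic_step_def has_tail_def)
    qed
  qed
  then show ?thesis unfolding tailed_loops_def by auto
qed

lemma card_pairs_not_backtracking:
  assumes "k \<ge> 1"
  shows "card {(e, c) \<in> loops_at_neighbours k x. hd c \<noteq> bar e \<and> last c \<noteq> e}
         = card (tailed_loops (k + 2) x)"
proof -
  let ?A = "{(e, c) \<in> loops_at_neighbours k x. hd c \<noteq> bar e \<and> last c \<noteq> e}"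
  let ?f = "\<lambda>(e, c). e # c @ [bar e]"
  have "inj_on ?f ?A" by (auto simp: inj_on_def)
  moreover have "?f ` ?A = tailed_loops (k + 2) x"
  proof (intro equalityI subsetI)
    fix d assume "d \<in> ?f ` ?A"
    then obtain e c where d: "d = e # c @ [bar e]" and "(e, c) \<in> ?A" by auto
    then have e: "e \<in> E" "org e = x" and c: "geodesic_loop k (ter e) c" "hd c \<noteq> bar e" "last c \<noteq> e"
      by (auto simp: loops_at_neighbours_def mem_out_iff)
    have c_E: "set c \<subseteq> E" "c \<noteq> []" "last c \<in> E" using c(1) unfolding geodesic_loop_def by auto
    have "bar e \<noteq> bar (last c)" using bar_eq_iff[OF e(1) c_E(3)] c(3) by auto
    then show "d \<in> tailed_loops (k + 2) x"
      using c e c_E unfolding d tailed_loops_def geodesic_loop_def has_tail_def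
      by (auto simp: successively_append_iff successively_Cons geodesic_step_def)
  next
    fix d assume "d \<in> tailed_loops (k + 2) x"
    then have d: "geodesic_loop (k + 2) x d" "last d = bar (hd d)"
      unfolding tailed_loops_def has_tail_def by auto
    obtain e r where er: "d = e # r" using d unfolding geodesic_loop_def by (cases d) auto
    have "r \<noteq> []" using d(1) er assms unfolding geodesic_loop_def by auto
    then obtain c l where cl: "r = c @ [l]" by (metis rev_exhaust)
    have "c \<noteq> []" using d(1) er cl assms unfolding geodesic_loop_def by auto
    have dd: "d = e # c @ [bar e]" using d(2) er cl by simp
    have "e \<in> E" "set c \<subseteq> E" using d(1) dd unfolding geodesic_loop_def by auto
    then have "(e, c) \<in> ?A"
      using d(1) \<open>c \<noteq> []\<close> unfolding dd geodesic_loop_def loops_at_neighbours_def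
      by (auto simp: successively_append_iff successively_Cons geodesic_step_def bar_eq_iff mem_out_iff)
    then show "d \<in> ?f ` ?A" unfolding dd by force
  qed
  ultimately show ?thesis using card_image by fastforce
qed

lemma card_pairs_backtracking_first:
  assumes "k \<ge> 1"
  shows "card {(e, c) \<in> loops_at_neighbours k x. hd c = bar e \<and> last c \<noteq> e}
         = card (closed_geodesics k x)"
proof -
  let ?A = "{(e, c) \<in> loops_at_neighbours k x. hd c = bar e \<and> last c \<noteq> e}"
  let ?f = "\<lambda>(e, c). tl c @ [hd c]"
  have "inj_on ?f ?A"
  proof (rule inj_onI)
    fix p p' assume "p \<in> ?A" "p' \<in> ?A" "?f p = ?f p'"
    moreover obtain e c e' c' where p: "p = (e, c)" "p' = (e', c')" by fastforce
    ultimately have a: "(e, c) \<in> ?A" "(e', c') \<in> ?A" "tl c @ [hd c] = tl c' @ [hd c']" by auto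
    have "c \<noteq> []" "c' \<noteq> []" "e \<in> E" "e' \<in> E"
      using a(1,2) by (auto simp: loops_at_neighbours_def mem_out_iff geodesic_loop_def)
    then have "c = c'" using a(3) by (metis list.collapse butlast_snoc last_snoc)
    then show "p = p'" using a(1,2) p \<open>e \<in> E\<close> \<open>e' \<in> E\<close> bar_eq_iff by auto
  qed
  moreover have "?f ` ?A = closed_geodesics k x"
  proof (intro equalityI subsetI)
    fix d assume "d \<in> ?f ` ?A"
    then obtain e c where d: "d = tl c @ [hd c]" and "(e, c) \<in> ?A" by auto
    then have e: "e \<in> E" "org e = x" and c: "geodesic_loop k (ter e) c" "hd c = bar e" "last c \<noteq> e"
      by (auto simp: loops_at_neighbours_def mem_out_iff)
    obtain q where cq: "c = bar e # q" using c unfolding geodesic_loop_def by (cases c) auto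
    have q_E: "set q \<subseteq> E" using c(1) cq unfolding geodesic_loop_def by auto
    show "d \<in> closed_geodesics k x"
    proof (cases "q = []")
      case True
      then show ?thesis using c e cq unfolding d closed_geodesics_def geodesic_loop_def has_tail_def by auto
    next
      case False
      have q_ends: "last q \<in> E" "hd q \<in> E" using q_E False by auto
      have "bar e \<noteq> bar (last q)" using bar_eq_iff[OF e(1) q_ends(1)] c(3) cq False by auto
      moreover have "bar e \<noteq> bar (hd q)"
        using c(1) cq False q_ends e bar_eq_iff[OF e(1) q_ends(2)]
        by (auto simp: geodesic_loop_def geodesic_step_def successively_Cons)
      ultimately show ?thesis
        using c e cq False q_E q_ends unfolding d closed_geodesics_def geodesic_loop_def has_tail_def
        by (auto simp: successively_append_iff successively_Cons geodesic_step_def)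
    qed
  next
    fix d assume "d \<in> closed_geodesics k x"
    then have d: "geodesic_loop k x d" "last d \<noteq> bar (hd d)"
      unfolding closed_geodesics_def has_tail_def by (auto simp: geodesic_loop_def)
    then obtain r l where rl: "d = r @ [l]" unfolding geodesic_loop_def by (metis rev_exhaust)
    have l_E: "l \<in> E" and r_E: "set r \<subseteq> E" using d(1) rl unfolding geodesic_loop_def by auto
    have "(bar l, l # r) \<in> ?A"
    proof (cases "r = []")
      case True
      then show ?thesis
        using d l_E rl unfolding loops_at_neighbours_def geodesic_loop_def by (auto simp: mem_out_iff)
    next
      case False
      have r_ends: "hd r \<in> E" "last r \<in> E" using r_E False by auto
      have "hd r \<noteq> bar l" using d(2) rl False r_ends l_E eq_bar_iff by auto
      moreover have "last r \<noteq> bar l" using d(1) rl False r_ends l_E eq_bar_iff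
        by (auto simp: geodesic_loop_def geodesic_step_def successively_append_iff)
      ultimately show ?thesis
        using d l_E rl False r_E r_ends unfolding loops_at_neighbours_def geodesic_loop_def
        by (auto simp: mem_out_iff successively_append_iff successively_Cons geodesic_step_def)
    qed
    moreover have "?f (bar l, l # r) = d" using rl by (cases r) auto
    ultimately show "d \<in> ?f ` ?A" by force
  qed
  ultimately show ?thesis using card_image by fastforce
qed

lemma card_pairs_backtracking_last:
  assumes "k \<ge> 1"
  shows "card {(e, c) \<in> loops_at_neighbours k x. hd c \<noteq> bar e \<and> last c = e}
         = card (closed_geodesics k x)"
proof -
  let ?A = "{(e, c) \<in> loops_at_neighbours k x. hd c \<noteq> bar e \<and> last c = e}"
  let ?f = "\<lambda>(e, c). e # butlast c"
  have "inj_on ?f ?A"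
  proof (rule inj_onI)
    fix p p' assume "p \<in> ?A" "p' \<in> ?A" "?f p = ?f p'"
    moreover obtain e c e' c' where p: "p = (e, c)" "p' = (e', c')" by fastforce
    ultimately have a: "(e, c) \<in> ?A" "(e', c') \<in> ?A" "e # butlast c = e' # butlast c'" by auto
    have "c \<noteq> []" "c' \<noteq> []" "last c = e" "last c' = e'"
      using a(1,2) by (auto simp: loops_at_neighbours_def geodesic_loop_def)
    then show "p = p'" using a(3) p by (metis list.inject append_butlast_last_id)
  qed
  moreover have "?f ` ?A = closed_geodesics k x"
  proof (intro equalityI subsetI)
    fix d assume "d \<in> ?f ` ?A"
    then obtain e c where d: "d = e # butlast c" and "(e, c) \<in> ?A" by auto
    then have e: "e \<in> E" "org e = x" and c: "geodesic_loop k (ter e) c" "hd c \<noteq> bar e" "last c = e"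
      by (auto simp: loops_at_neighbours_def mem_out_iff)
    have "c \<noteq> []" using c unfolding geodesic_loop_def by auto
    then obtain p where cp: "c = p @ [e]" using c(3) by (metis append_butlast_last_id)
    have p_E: "set p \<subseteq> E" using c(1) cp unfolding geodesic_loop_def by auto
    have dd: "d = e # p" using d cp by simp
    show "d \<in> closed_geodesics k x"
    proof (cases "p = []")
      case True
      then show ?thesis using c e cp unfolding dd closed_geodesics_def geodesic_loop_def has_tail_def by auto
    next
      case False
      have p_ends: "last p \<in> E" "hd p \<in> E" using p_E False by auto
      have "e \<noteq> bar (last p)" using c(1) cp False
        by (auto simp: geodesic_loop_def geodesic_step_def successively_append_iff)
      then have "last p \<noteq> bar e" using eq_bar_iff p_ends e by auto
      then show ?thesis
        using c e cp False p_E p_ends unfolding dd closed_geodesics_def geodesic_loop_def has_tail_def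
        by (auto simp: successively_append_iff successively_Cons geodesic_step_def)
    qed
  next
    fix d assume "d \<in> closed_geodesics k x"
    then have d: "geodesic_loop k x d" "last d \<noteq> bar (hd d)"
      unfolding closed_geodesics_def has_tail_def by (auto simp: geodesic_loop_def)
    then obtain e r where er: "d = e # r" unfolding geodesic_loop_def by (cases d) auto
    have e_E: "e \<in> E" and r_E: "set r \<subseteq> E" using d(1) er unfolding geodesic_loop_def by auto
    have "(e, r @ [e]) \<in> ?A"
    proof (cases "r = []")
      case True
      then show ?thesis
        using d e_E er unfolding loops_at_neighbours_def geodesic_loop_def by (auto simp: mem_out_iff)
    next
      case False
      have r_ends: "hd r \<in> E" "last r \<in> E" using r_E False by auto
      have "e \<noteq> bar (last r)" using d(2) er False r_ends e_E eq_bar_iff by auto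
      moreover have "hd r \<noteq> bar e" using d(1) er False r_ends e_E
        by (auto simp: geodesic_loop_def geodesic_step_def successively_Cons)
      ultimately show ?thesis
        using d e_E er False r_E r_ends unfolding loops_at_neighbours_def geodesic_loop_def
        by (auto simp: mem_out_iff successively_append_iff successively_Cons geodesic_step_def)
    qed
    moreover have "?f (e, r @ [e]) = d" using er by simp
    ultimately show "d \<in> ?f ` ?A" by force
  qed
  ultimately show ?thesis using card_image by fastforce
qed

lemma pairs_backtracking_both_le_2:
  assumes "k \<le> 2"
  shows "{(e, c) \<in> loops_at_neighbours k x. hd c = bar e \<and> last c = e} = {}"
proof -
  have False if "(e, c) \<in> loops_at_neighbours k x" "hd c = bar e" "last c = e" for e c
  proof -
    have e: "e \<in> E" and c: "geodesic_loop k (ter e) c"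
      using that(1) by (auto simp: loops_at_neighbours_def mem_out_iff)
    then obtain h r where "c = h # r" by (cases c) (auto simp: geodesic_loop_def)
    show False
    proof (cases r)
      case Nil
      then show ?thesis using that \<open>c = h # r\<close> e by auto
    next
      case (Cons h' r')
      then have "r' = []" using c \<open>c = h # r\<close> assms by (auto simp: geodesic_loop_def)
      then show ?thesis
        using that c Cons \<open>c = h # r\<close> e by (auto simp: geodesic_loop_def geodesic_step_def)
    qed
  qed
  then show ?thesis by auto
qed

lemma card_pairs_backtracking_both:
  assumes "j \<ge> 1"
  shows "card {(e, c) \<in> loops_at_neighbours (j + 2) x. hd c = bar e \<and> last c = e}
         = card (SIGMA c:{c. geodesic_loop j x c}. {e \<in> out x. e \<noteq> hd c \<and> e \<noteq> bar (last c)})"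
proof -
  let ?A = "{(e, c) \<in> loops_at_neighbours (j + 2) x. hd c = bar e \<and> last c = e}"
  let ?B = "SIGMA c:{c. geodesic_loop j x c}. {e \<in> out x. e \<noteq> hd c \<and> e \<noteq> bar (last c)}"
  let ?f = "\<lambda>(c, e). (e, bar e # c @ [e])"
  have "inj_on ?f ?B" by (auto simp: inj_on_def)
  moreover have "?f ` ?B = ?A"
  proof (intro equalityI subsetI)
    fix p assume "p \<in> ?f ` ?B"
    then obtain c e where p: "p = (e, bar e # c @ [e])" and "(c, e) \<in> ?B" by auto
    then have e: "e \<in> E" "org e = x" "e \<noteq> hd c" "e \<noteq> bar (last c)" and c: "geodesic_loop j x c"
      by (auto simp: mem_out_iff)
    have "set c \<subseteq> E" "c \<noteq> []" "hd c \<in> E" "last c \<in> E" using c by (auto simp: geodesic_loop_def)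
    moreover have "hd c \<noteq> bar (bar e)" using e by simp
    ultimately show "p \<in> ?A" using c e unfolding p loops_at_neighbours_def geodesic_loop_def
      by (auto simp: mem_out_iff successively_append_iff successively_Cons geodesic_step_def)
  next
    fix p assume "p \<in> ?A"
    then obtain e d where p: "p = (e, d)" and "(e, d) \<in> ?A" by (cases p) auto
    then have e: "e \<in> E" "org e = x"
      and d: "geodesic_loop (j + 2) (ter e) d" "hd d = bar e" "last d = e"
      by (auto simp: loops_at_neighbours_def mem_out_iff)
    obtain h r where hr: "d = h # r" using d by (cases d) (auto simp: geodesic_loop_def)
    have "r \<noteq> []" using d hr assms by (auto simp: geodesic_loop_def)
    then obtain c l where cl: "r = c @ [l]" by (metis rev_exhaust)
    have dd: "d = bar e # c @ [e]" using hr cl d by auto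
    have "c \<noteq> []" using d dd assms by (auto simp: geodesic_loop_def)
    moreover have "set c \<subseteq> E" "hd c \<in> E" "last c \<in> E"
      using d dd \<open>c \<noteq> []\<close> by (auto simp: geodesic_loop_def)
    ultimately have "(c, e) \<in> ?B"
      using d e unfolding dd geodesic_loop_def
      by (auto simp: mem_out_iff successively_append_iff successively_Cons geodesic_step_def eq_bar_iff)
    then show "p \<in> ?f ` ?B" unfolding p dd by force
  qed
  ultimately show ?thesis using card_image by fastforce
qed

lemma card_out_avoiding_ends:
  assumes "geodesic_loop j x c"
  shows "card {e \<in> out x. e \<noteq> hd c \<and> e \<noteq> bar (last c)} + 2
         = card (out x) + (if has_tail bar c then 1 else 0)"
proof -
  have "hd c \<in> E" "last c \<in> E" using assms by (auto simp: geodesic_loop_def)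
  then have ends: "hd c \<in> out x" "bar (last c) \<in> out x" "hd c \<in> E" "last c \<in> E"
    using assms by (auto simp: geodesic_loop_def mem_out_iff)
  have "{e \<in> out x. e \<noteq> hd c \<and> e \<noteq> bar (last c)} = out x - {hd c, bar (last c)}" by auto
  moreover have "card (out x - {hd c, bar (last c)}) = card (out x) - card {hd c, bar (last c)}"
    using ends by (simp add: card_Diff_subset finite_out)
  moreover have "card {hd c, bar (last c)} \<le> card (out x)"
    using ends by (simp add: card_mono finite_out)
  moreover have "has_tail bar c \<longleftrightarrow> hd c = bar (last c)"
    using assms ends by (auto simp: geodesic_loop_def has_tail_def eq_bar_iff)
  ultimately show ?thesis by (cases "has_tail bar c") auto
qed

lemma card_pairs_backtracking_both_eq:
  assumes "j \<ge> 1"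
  shows "int (card {(e, c) \<in> loops_at_neighbours (j + 2) x. hd c = bar e \<and> last c = e})
         = (int (card (out x)) - 2) * int (card {c. geodesic_loop j x c}) + int (card (tailed_loops j x))"
proof -
  let ?L = "{c. geodesic_loop j x c}"
  have "int (card {(e, c) \<in> loops_at_neighbours (j + 2) x. hd c = bar e \<and> last c = e})
      = (\<Sum>c\<in>?L. int (card {e \<in> out x. e \<noteq> hd c \<and> e \<noteq> bar (last c)}))"
    unfolding card_pairs_backtracking_both[OF assms] of_nat_sum[symmetric]
    by (subst card_SigmaI) (auto simp: finite_geodesic_loops finite_out)
  also have "\<dots> = (\<Sum>c\<in>?L. int (card (out x)) - 2 + (if has_tail bar c then 1 else 0))"
  proof (rule sum.cong)
    fix c assume "c \<in> ?L"
    then show "int (card {e \<in> out x. e \<noteq> hd c \<and> e \<noteq> bar (last c)})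
        = int (card (out x)) - 2 + (if has_tail bar c then 1 else 0)"
      using card_out_avoiding_ends[of j x c] by (cases "has_tail bar c") auto
  qed simp
  also have "\<dots> = (int (card (out x)) - 2) * int (card ?L) + int (card {c \<in> ?L. has_tail bar c})"
    using finite_geodesic_loops by (simp add: sum.distrib sum.If_cases mult.commute Collect_conj_eq)
  finally show ?thesis unfolding tailed_loops_def by (simp add: Collect_conj_eq)
qed

lemma card_loops_at_neighbours_split:
  "card (loops_at_neighbours k x)
     = card {(e, c) \<in> loops_at_neighbours k x. hd c \<noteq> bar e \<and> last c \<noteq> e}
     + card {(e, c) \<in> loops_at_neighbours k x. hd c = bar e \<and> last c \<noteq> e}
     + card {(e, c) \<in> loops_at_neighbours k x. hd c \<noteq> bar e \<and> last c = e}
     + card {(e, c) \<in> loops_at_neighbours k x. hd c = bar e \<and> last c = e}"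
proof -
  let ?L = "loops_at_neighbours k x"
  let ?S = "\<lambda>P Q. {(e, c) \<in> ?L. P (hd c = bar e) \<and> Q (last c = e)}"
  have fin: "finite A" if "A \<subseteq> ?L" for A using that finite_loops_at_neighbours finite_subset by blast
  have "?L = ((?S Not Not \<union> ?S id Not) \<union> ?S Not id) \<union> ?S id id" by auto
  then have "card ?L = card (((?S Not Not \<union> ?S id Not) \<union> ?S Not id) \<union> ?S id id)" by simp
  also have "\<dots> = card (?S Not Not) + card (?S id Not) + card (?S Not id) + card (?S id id)"
    by (subst card_Un_disjoint, (auto intro!: fin)[3])+ simp
  finally show ?thesis by simp
qed

lemma ck_eq_tailed_plus_closed:
  "k \<ge> 1 \<Longrightarrow> ck E org ter bar k x = card (tailed_loops k x) + card (closed_geodesics k x)"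
  unfolding card_geodesic_loops tailed_loops_def closed_geodesics_def
  using card_filter_split[OF finite_geodesic_loops, of k x "has_tail bar"] by simp

lemma Nm_eq_card_closed_geodesics: "Nm E org ter bar m x = card (closed_geodesics m x)"
  unfolding Nm_def geod_loops_eq closed_geodesics_def by simp

lemma sum_ck_neighbours:
  assumes "k \<ge> 1"
  shows "(\<Sum>e\<in>out x. int (ck E org ter bar k (ter e)))
      = int (card (tailed_loops (k + 2) x)) + 2 * int (card (closed_geodesics k x))
      + (if k \<le> 2 then 0 else (int (card (out x)) - 2) * int (ck E org ter bar (k - 2) x)
                                + int (card (tailed_loops (k - 2) x)))"
proof -
  have "(\<Sum>e\<in>out x. int (ck E org ter bar k (ter e))) = int (card (loops_at_neighbours k x))"
    unfolding card_geodesic_loops[OF assms] loops_at_neighbours_def of_nat_sum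
    by (subst card_SigmaI) (auto simp: finite_out finite_geodesic_loops)
  also have "\<dots> = int (card (tailed_loops (k + 2) x)) + 2 * int (card (closed_geodesics k x))
      + int (card {(e, c) \<in> loops_at_neighbours k x. hd c = bar e \<and> last c = e})"
    unfolding card_loops_at_neighbours_split card_pairs_not_backtracking[OF assms]
      card_pairs_backtracking_first[OF assms] card_pairs_backtracking_last[OF assms] by simp
  also have "int (card {(e, c) \<in> loops_at_neighbours k x. hd c = bar e \<and> last c = e})
      = (if k \<le> 2 then 0 else (int (card (out x)) - 2) * int (ck E org ter bar (k - 2) x)
                                + int (card (tailed_loops (k - 2) x)))"
  proof (cases "k \<le> 2")
    case True
    then show ?thesis unfolding pairs_backtracking_both_le_2[OF True] by simp
  next
    case False
    then have "k = (k - 2) + 2" "k - 2 \<ge> 1" by auto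
    then show ?thesis
      using card_pairs_backtracking_both_eq[of "k - 2" x] card_geodesic_loops[of "k - 2" x] False
      by simp
  qed
  finally show ?thesis .
qed

end

theorem proposition3p2:
  fixes V :: "'v set" and E :: "'e set" and org ter :: "'e \<Rightarrow> 'v" and bar :: "'e \<Rightarrow> 'e"
    and x0 :: 'v and m :: nat
  assumes "is_graph V E org ter bar"
    and "connected_graph V E org ter"
    and "countable V"
    and "bounded_degree V E org"
    and "\<forall>x\<in>V. gdeg E org x \<noteq> 1"
    and "x0 \<in> V"
    and "m > 2"
  shows "int (Nm E org ter bar m x0) =
           int (ck E org ter bar m x0)
           - (int (gdeg E org x0) - 2) *
               (\<Sum>i\<in>{1..nat \<lceil>real m / 2\<rceil> - 1}. int (ck E org ter bar (m - 2 * i) x0))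
           + (\<Sum>i\<in>{1..nat \<lceil>real m / 2\<rceil> - 1}. int i * laplace_ck E org ter bar (m - 2 * i) x0)"
proof -
  interpret locally_finite_graph V E org ter bar
    using assms(1,4) unfolding bounded_degree_def by unfold_locales blast+
  let ?d = "int (gdeg E org x0)"
  let ?T = "\<lambda>j. int (card (tailed_loops j x0))"
  let ?c = "\<lambda>j. int (ck E org ter bar j x0)"
  let ?s = "\<lambda>j. \<Sum>e\<in>out x0. int (ck E org ter bar j (ter e))"
  have "?T m = (?d - 2) * parity_sum ?c m - weighted_parity_sum (\<lambda>j. ?d * ?c j - ?s j) m"
  proof (rule recurrence_solution)
    show "?T 1 = 0" "?T 2 = 0" by (simp_all add: tailed_loops_le_2)
    show "?s k = ?T (k + 2) + 2 * (?c k - ?T k) +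
          (if k \<le> 2 then 0 else (?d - 2) * ?c (k - 2) + ?T (k - 2))" if "k \<ge> 1" for k
      using sum_ck_neighbours[OF that] ck_eq_tailed_plus_closed[OF that] by (simp add: gdeg_def)
  qed (use assms(7) in simp)
  moreover have "int (Nm E org ter bar m x0) = ?c m - ?T m"
    using ck_eq_tailed_plus_closed[of m x0] assms(7) by (simp add: Nm_eq_card_closed_geodesics)
  ultimately show ?thesis
    unfolding nat_ceiling_half_minus_one parity_sum_def weighted_parity_sum_def laplace_ck_def
    by simp
qed

end
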